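(* The calibrated hypergraph category $G_C\Omega$ equipped with the monadic multiplication $\smile$ given by $(H,\varrho)\smile(K,\varsigma)=(H\smile K,\varrho\smile\varsigma)$ and unit $(O,\varepsilon)$ is a graded $\Omega$ monad.
   Context: $\Omega$ is the category of finite ordinals $[l]=\{0,\dots,l-1\}$ and all functions, strict monoidal with $[l]\smile[m]=[l+m]$, $f\smile g(i)=f(i)$ for $i\in[l]$, $g(i-l)+p$ for $i\in[m]+l$, unit $[0]$. $G[l]$ is the set of hypergraphs on $[l]$ (sets of non empty subsets), $Gf(H)=\{f(X)\mid X\in H\}$, $H\smile K=H\cup(K+l)$, $O=\emptyset$. Fix finite additive commutative monoids $\mathsf{A}$, $\mathsf{M}$; $\mathsf{A}^X$ is the monoid of functions $X\to\mathsf{A}$, $f_\star(w)(s)=\sum_{f(r)=s}w(r)$, $f_*(\varpi)(v)=\sum_{f_\star(w)=v}\varpi(w)$. A calibration $\varrho\in C(H)$ assigns to each $X\in H$ a function $\varrho_X:\mathsf{A}^X\to\mathsf{M}$; $f_{H*}(\varrho)_Y=\sum_{X\in H,f(X)=Y}f|_{X*}(\varrho_X)$. The calibrated hypergraph category $G_C\Omega$ is the $\Omega$ category with objects $G_C[l]=\{(H,\varrho)\mid H\in G[l],\varrho\in C(H)\}$ and morphisms $G_Cf(H,\varrho)=(Gf(H),f_{H*}(\varrho))$. The calibration product is $(\varrho\smile\varsigma)_X=\varrho_X$ for $X\in H$, $\varsigma_{X-l}\circ t_{Xl\star}$ for $X\in K+l$ (with $t_{Xl}(r)=r-l$), and $\varepsilon=e_\emptyset$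 (empty function). A graded $\Omega$ monad is a concrete $\Omega$ category $D\Omega$ with maps $\smile:D[l]\times D[m]\to D([l]\smile[m])$ and $\iota\in D[0]$ that are associative, unital ($\lambda\smile\iota=\iota\smile\lambda=\lambda$) and satisfy $Df\smile Dg(\lambda\smile\mu)=Df(\lambda)\smile Dg(\mu)$. *)

theory Defs
  imports Main "HOL-Library.FuncSet"
begin

definition omega_hom :: "nat \<Rightarrow> nat \<Rightarrow> (nat \<Rightarrow> nat) set" where
  "omega_hom l p = {..<l} \<rightarrow>\<^sub>E {..<p}"

definition omega_id :: "nat \<Rightarrow> nat \<Rightarrow> nat" where
  "omega_id l = (\<lambda>i\<in>{..<l}. i)"

definition omega_comp :: "nat \<Rightarrow> (nat \<Rightarrow> nat) \<Rightarrow> (nat \<Rightarrow> nat) \<Rightarrow> nat \<Rightarrow> nat" where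
  "omega_comp l g f = compose {..<l} g f"

definition omega_cup :: "nat \<Rightarrow> nat \<Rightarrow> nat \<Rightarrow> (nat \<Rightarrow> nat) \<Rightarrow> (nat \<Rightarrow> nat) \<Rightarrow> nat \<Rightarrow> nat" where
  "omega_cup l m p f g = (\<lambda>i. if i < l then f i else if i < l + m then g (i - l) + p else undefined)"

text \<open>A concrete Omega category (a functor D : Omega -> Set, D l being the set
  D[l] and Dmap f the map Df) with a graded multiplication cup (cup l x y
  for x in D[l]) and a unit iota in D[0].\<close>

definition graded_Omega_monad ::
  "(nat \<Rightarrow> 'o set) \<Rightarrow> ((nat \<Rightarrow> nat) \<Rightarrow> 'o \<Rightarrow> 'o) \<Rightarrow> (nat \<Rightarrow> 'o \<Rightarrow> 'o \<Rightarrow> 'o) \<Rightarrow> 'o \<Rightarrow> bool" where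
  "graded_Omega_monad D Dmap cup iota \<longleftrightarrow>
     \<comment> \<open>concrete Omega category (functor to Set)\<close>
     (\<forall>l p f x. f \<in> omega_hom l p \<longrightarrow> x \<in> D l \<longrightarrow> Dmap f x \<in> D p) \<and>
     (\<forall>l x. x \<in> D l \<longrightarrow> Dmap (omega_id l) x = x) \<and>
     (\<forall>l p q f g x. f \<in> omega_hom l p \<longrightarrow> g \<in> omega_hom p q \<longrightarrow> x \<in> D l \<longrightarrow>
        Dmap (omega_comp l g f) x = Dmap g (Dmap f x)) \<and>
     \<comment> \<open>multiplication and unit\<close>
     (\<forall>l m x y. x \<in> D l \<longrightarrow> y \<in> D m \<longrightarrow> cup l x y \<in> D (l + m)) \<and>
     iota \<in> D 0 \<and>
     \<comment> \<open>associativity\<close>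
     (\<forall>l m n x y z. x \<in> D l \<longrightarrow> y \<in> D m \<longrightarrow> z \<in> D n \<longrightarrow>
        cup (l + m) (cup l x y) z = cup l x (cup m y z)) \<and>
     \<comment> \<open>unitality\<close>
     (\<forall>l x. x \<in> D l \<longrightarrow> cup l x iota = x \<and> cup 0 iota x = x) \<and>
     \<comment> \<open>naturality: D(f \<smile> g)(x \<smile> y) = Df(x) \<smile> Dg(y)\<close>
     (\<forall>l m p q f g x y. f \<in> omega_hom l p \<longrightarrow> g \<in> omega_hom m q \<longrightarrow>
        x \<in> D l \<longrightarrow> y \<in> D m \<longrightarrow>
        Dmap (omega_cup l m p f g) (cup l x y) = cup p (Dmap f x) (Dmap g y))"

definition hypergraphs :: "nat \<Rightarrow> nat set set set" where
  "hypergraphs l = {H. \<forall>X\<in>H. X \<noteq> {} \<and> X \<subseteq> {..<l}}"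

definition shift_set :: "nat \<Rightarrow> nat set \<Rightarrow> nat set" where
  "shift_set l X = (\<lambda>r. r + l) ` X"

definition hg_cup :: "nat \<Rightarrow> nat set set \<Rightarrow> nat set set \<Rightarrow> nat set set" where
  "hg_cup l H K = H \<union> shift_set l ` K"

text \<open>A^X is represented by functions nat => 'a vanishing outside X.\<close>
definition Fun :: "nat set \<Rightarrow> (nat \<Rightarrow> 'a::zero) set" where
  "Fun X = {w. \<forall>r. r \<notin> X \<longrightarrow> w r = 0}"

definition push_star :: "nat set \<Rightarrow> (nat \<Rightarrow> nat) \<Rightarrow> (nat \<Rightarrow> 'a::comm_monoid_add) \<Rightarrow> nat \<Rightarrow> 'a" where
  "push_star X f w = (\<lambda>s. \<Sum>r\<in>{r\<in>X. f r = s}. w r)"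

definition push_cal :: "nat set \<Rightarrow> (nat \<Rightarrow> nat) \<Rightarrow> ((nat \<Rightarrow> 'a::comm_monoid_add) \<Rightarrow> 'm::comm_monoid_add)
    \<Rightarrow> (nat \<Rightarrow> 'a) \<Rightarrow> 'm" where
  "push_cal X f vp = (\<lambda>v. \<Sum>w\<in>{w\<in>Fun X. push_star X f w = v}. vp w)"

text \<open>A calibration on H: rho X is a map A^X -> M for X in H; the representation
  is made canonical by requiring value 0 outside H and outside A^X.\<close>
definition calibrations :: "nat set set \<Rightarrow> (nat set \<Rightarrow> (nat \<Rightarrow> 'a::zero) \<Rightarrow> 'm::zero) set" where
  "calibrations H = {\<rho>. (\<forall>X. X \<notin> H \<longrightarrow> (\<forall>w. \<rho> X w = 0)) \<and>
                        (\<forall>X\<in>H. \<forall>w. w \<notin> Fun X \<longrightarrow> \<rho> X w = 0)}"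

definition cal_push :: "nat set set \<Rightarrow> (nat \<Rightarrow> nat) \<Rightarrow> (nat set \<Rightarrow> (nat \<Rightarrow> 'a::comm_monoid_add) \<Rightarrow> 'm::comm_monoid_add)
    \<Rightarrow> nat set \<Rightarrow> (nat \<Rightarrow> 'a) \<Rightarrow> 'm" where
  "cal_push H f \<rho> = (\<lambda>Y v. \<Sum>X\<in>{X\<in>H. f ` X = Y}. push_cal X f (\<rho> X) v)"

definition cal_cup :: "nat \<Rightarrow> nat set set \<Rightarrow> nat set set
    \<Rightarrow> (nat set \<Rightarrow> (nat \<Rightarrow> 'a::comm_monoid_add) \<Rightarrow> 'm::comm_monoid_add)
    \<Rightarrow> (nat set \<Rightarrow> (nat \<Rightarrow> 'a) \<Rightarrow> 'm) \<Rightarrow> nat set \<Rightarrow> (nat \<Rightarrow> 'a) \<Rightarrow> 'm" where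
  "cal_cup l H K \<rho> \<sigma> = (\<lambda>X w.
     if X \<in> H then \<rho> X w
     else if X \<in> shift_set l ` K \<and> w \<in> Fun X
       then \<sigma> ((\<lambda>r. r - l) ` X) (push_star X (\<lambda>r. r - l) w)
     else 0)"

text \<open>epsilon = e_emptyset, the (unique) calibration of the empty hypergraph.\<close>
definition cal_unit :: "nat set \<Rightarrow> (nat \<Rightarrow> 'a::zero) \<Rightarrow> 'm::zero" where
  "cal_unit = (\<lambda>X w. 0)"

type_synonym ('a, 'm) chg = "nat set set \<times> (nat set \<Rightarrow> (nat \<Rightarrow> 'a) \<Rightarrow> 'm)"

definition GC :: "nat \<Rightarrow> ('a::comm_monoid_add, 'm::comm_monoid_add) chg set" where
  "GC l = {(H, \<rho>). H \<in> hypergraphs l \<and> \<rho> \<in> calibrations H}"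

definition GC_map :: "(nat \<Rightarrow> nat) \<Rightarrow> ('a::comm_monoid_add, 'm::comm_monoid_add) chg \<Rightarrow> ('a, 'm) chg" where
  "GC_map f = (\<lambda>(H, \<rho>). ((`) f ` H, cal_push H f \<rho>))"

definition GC_cup :: "nat \<Rightarrow> ('a::comm_monoid_add, 'm::comm_monoid_add) chg \<Rightarrow> ('a, 'm) chg \<Rightarrow> ('a, 'm) chg" where
  "GC_cup l = (\<lambda>(H, \<rho>) (K, \<sigma>). (hg_cup l H K, cal_cup l H K \<rho> \<sigma>))"

definition GC_unit :: "('a::comm_monoid_add, 'm::comm_monoid_add) chg" where
  "GC_unit = ({}, cal_unit)"

end

theory Submission
  imports Defs
begin

(* The product (H, \<rho>) \<smile> (K, \<sigma>) is the sum of (H, \<rho>) and the image of (K, \<sigma>) under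
   the shift r \<mapsto> r + l: pushing a calibration forward along an injective map merely
   transports it, which is what the formula \<sigma>_{X-l} \<circ> t_{Xl\<star>} does.  Pushforward of
   calibrations is functorial, additive, and depends only on the values of the map on the
   vertices, so associativity, unitality and naturality of \<smile> reduce to identities between
   shifts together with associativity of the sum. *)

subsection \<open>Pushforward of weights\<close>

lemma push_star_cong:
  assumes "\<And>r. r \<in> X \<Longrightarrow> f r = g r"
  shows "push_star X f = push_star X g"
proof -
  have "\<And>s. {r \<in> X. f r = s} = {r \<in> X. g r = s}"
    using assms by auto
  then show ?thesis
    unfolding push_star_def by simp
qed

lemma push_star_in_Fun: "push_star X f w \<in> Fun (f ` X)"
  unfolding Fun_def push_star_def by (auto intro!: sum.neutral)

lemma push_star_ident:
  assumes "w \<in> Fun X" and "\<And>r. r \<in> X \<Longrightarrow> f r = r"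
  shows "push_star X f w = w"
proof -
  have "\<And>s. {r \<in> X. f r = s} = (if s \<in> X then {s} else {})"
    using assms(2) by auto
  then show ?thesis
    using assms(1) unfolding push_star_def Fun_def by (auto simp: fun_eq_iff)
qed

lemma push_star_comp:
  assumes "finite X"
  shows "push_star (f ` X) g (push_star X f w) = push_star X (\<lambda>r. g (f r)) w"
proof
  fix s
  have "(\<Sum>t\<in>{t \<in> f ` X. g t = s}. sum w {r \<in> {r \<in> X. g (f r) = s}. f r = t})
      = sum w {r \<in> X. g (f r) = s}"
    by (rule sum.group) (use assms in auto)
  moreover have "\<And>t. g t = s \<Longrightarrow> {r \<in> {r \<in> X. g (f r) = s}. f r = t} = {r \<in> X. f r = t}"
    by auto
  ultimately show "push_star (f ` X) g (push_star X f w) s = push_star X (\<lambda>r. g (f r)) w s"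
    unfolding push_star_def by simp
qed

lemma push_cal_cong: "(\<And>r. r \<in> X \<Longrightarrow> f r = g r) \<Longrightarrow> push_cal X f = push_cal X g"
  unfolding push_cal_def by (simp add: push_star_cong[of X f g])

lemma push_cal_eq_0: "v \<notin> Fun (f ` X) \<Longrightarrow> push_cal X f \<psi> v = 0"
  unfolding push_cal_def using push_star_in_Fun[of X f] by (auto intro!: sum.neutral)

lemma push_cal_zero: "push_cal X f (\<lambda>w. 0) v = 0"
  unfolding push_cal_def by simp

lemma push_cal_add: "push_cal X f (\<lambda>w. \<phi> w + \<psi> w) v = push_cal X f \<phi> v + push_cal X f \<psi> v"
  unfolding push_cal_def by (rule sum.distrib)

lemma push_cal_sum: "push_cal X f (\<lambda>w. \<Sum>i\<in>I. \<phi> i w) v = (\<Sum>i\<in>I. push_cal X f (\<phi> i) v)"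
  unfolding push_cal_def by (rule sum.swap)

lemma finite_Fun:
  assumes "finite X"
  shows "finite (Fun X :: (nat \<Rightarrow> 'a::{zero,finite}) set)"
proof -
  have "Fun X \<subseteq> (\<lambda>g r. if r \<in> X then g r else 0) ` (X \<rightarrow>\<^sub>E (UNIV :: 'a set))"
  proof
    fix w :: "nat \<Rightarrow> 'a"
    assume "w \<in> Fun X"
    then have "w = (\<lambda>r. if r \<in> X then restrict w X r else 0)"
      by (auto simp: Fun_def fun_eq_iff)
    moreover have "restrict w X \<in> X \<rightarrow>\<^sub>E UNIV"
      by simp
    ultimately show "w \<in> (\<lambda>g r. if r \<in> X then g r else 0) ` (X \<rightarrow>\<^sub>E UNIV)"
      by blast
  qed
  moreover have "finite (X \<rightarrow>\<^sub>E (UNIV :: 'a set))"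
    using assms by (intro finite_PiE) auto
  ultimately show ?thesis
    by (metis finite_surj)
qed

lemma push_cal_comp:
  fixes \<psi> :: "(nat \<Rightarrow> 'a::{comm_monoid_add,finite}) \<Rightarrow> 'm::comm_monoid_add"
  assumes "finite X"
  shows "push_cal (f ` X) g (push_cal X f \<psi>) = push_cal X (\<lambda>r. g (f r)) \<psi>"
proof
  fix v
  let ?S = "{u :: nat \<Rightarrow> 'a. u \<in> Fun X \<and> push_star X (\<lambda>r. g (f r)) u = v}"
  let ?T = "{w :: nat \<Rightarrow> 'a. w \<in> Fun (f ` X) \<and> push_star (f ` X) g w = v}"
  have "finite ?S"
    by (rule finite_subset[OF _ finite_Fun[OF assms]]) auto
  moreover have "finite ?T"
    by (rule finite_subset[OF _ finite_Fun[of "f ` X"]]) (use assms in auto)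
  ultimately have "(\<Sum>w\<in>?T. sum \<psi> {u \<in> ?S. push_star X f u = w}) = sum \<psi> ?S"
    by (rule sum.group) (auto simp: push_star_in_Fun push_star_comp[OF assms])
  moreover have "\<And>w. w \<in> ?T \<Longrightarrow> {u \<in> ?S. push_star X f u = w} = {u \<in> Fun X. push_star X f u = w}"
    by (auto simp: push_star_comp[OF assms, symmetric])
  ultimately show "push_cal (f ` X) g (push_cal X f \<psi>) v = push_cal X (\<lambda>r. g (f r)) \<psi> v"
    unfolding push_cal_def by simp
qed

lemma push_cal_inj:
  assumes "finite X" and inv: "\<And>r. r \<in> X \<Longrightarrow> k (h r) = r"
  shows "push_cal X h \<psi> v = (if v \<in> Fun (h ` X) then \<psi> (push_star (h ` X) k v) else 0)"
proof (cases "v \<in> Fun (h ` X)")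
  case True
  have "k ` h ` X = X"
    using inv by (force simp: image_image)
  have "{u \<in> Fun X. push_star X h u = v} = {push_star (h ` X) k v}"
  proof (intro equalityI subsetI)
    fix u
    assume u: "u \<in> {u \<in> Fun X. push_star X h u = v}"
    then have "push_star (h ` X) k v = push_star X (\<lambda>r. k (h r)) u"
      using push_star_comp[OF assms(1)] by auto
    also have "\<dots> = u"
      using u inv by (intro push_star_ident) auto
    finally show "u \<in> {push_star (h ` X) k v}"
      by simp
  next
    fix u
    assume u: "u \<in> {push_star (h ` X) k v}"
    then have "u \<in> Fun X"
      using push_star_in_Fun[of "h ` X" k v] \<open>k ` h ` X = X\<close> by simp
    moreover have "push_star X h u = push_star (h ` X) (\<lambda>r. h (k r)) v"
      using u \<open>k ` h ` X = X\<close> push_star_comp[of "h ` X" k h v] assms(1) by simp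
    moreover have "\<dots> = v"
      using True inv by (intro push_star_ident) auto
    ultimately show "u \<in> {u \<in> Fun X. push_star X h u = v}"
      by simp
  qed
  then show ?thesis
    using True unfolding push_cal_def by simp
qed (simp add: push_cal_eq_0)

subsection \<open>Pushforward of calibrations\<close>

lemma calibrations_vanish: "\<rho> \<in> calibrations H \<Longrightarrow> X \<notin> H \<Longrightarrow> \<rho> X = (\<lambda>w. 0)"
  by (auto simp: calibrations_def)

lemma calibrations_add:
  fixes \<rho> :: "nat set \<Rightarrow> (nat \<Rightarrow> 'a::zero) \<Rightarrow> 'm::monoid_add"
  assumes "\<rho> \<in> calibrations H" and "\<sigma> \<in> calibrations K"
  shows "(\<lambda>X w. \<rho> X w + \<sigma> X w) \<in> calibrations (H \<union> K)"
proof -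
  have "\<rho> X w = 0" and "\<sigma> X w = 0" if "X \<in> H \<union> K" and "w \<notin> Fun X" for X w
    using assms that unfolding calibrations_def by blast+
  then show ?thesis
    using assms unfolding calibrations_def by simp
qed

lemma cal_push_cong:
  assumes "\<And>X r. X \<in> H \<Longrightarrow> r \<in> X \<Longrightarrow> f r = g r"
  shows "cal_push H f \<rho> = cal_push H g \<rho>"
proof -
  have "\<And>X. X \<in> H \<Longrightarrow> f ` X = g ` X"
    using assms by (auto intro: image_cong)
  then have fibre: "\<And>Y. {X \<in> H. f ` X = Y} = {X \<in> H. g ` X = Y}"
    by auto
  have "push_cal X f \<psi> v = push_cal X g \<psi> v" if "X \<in> H" for X \<psi> v
    by (subst push_cal_cong[of X f g]) (use assms that in auto)
  then show ?thesis
    unfolding cal_push_def fibre by (intro ext sum.cong refl) simp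
qed

lemma cal_push_in_calibrations:
  fixes \<rho> :: "nat set \<Rightarrow> (nat \<Rightarrow> 'a::comm_monoid_add) \<Rightarrow> 'm::comm_monoid_add"
  shows "cal_push H f \<rho> \<in> calibrations ((`) f ` H)"
  unfolding calibrations_def cal_push_def
  by (auto intro!: sum.neutral push_cal_eq_0)

lemma cal_push_ident:
  assumes "\<rho> \<in> calibrations H" and "\<And>X. X \<in> H \<Longrightarrow> finite X"
    and ident: "\<And>X r. X \<in> H \<Longrightarrow> r \<in> X \<Longrightarrow> f r = r"
  shows "cal_push H f \<rho> = \<rho>"
proof (intro ext)
  fix Y v
  have image: "\<And>X. X \<in> H \<Longrightarrow> f ` X = X"
    using ident by force
  then have fibre: "{X \<in> H. f ` X = Y} = (if Y \<in> H then {Y} else {})"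
    by auto
  show "cal_push H f \<rho> Y v = \<rho> Y v"
  proof (cases "Y \<in> H")
    case True
    have "push_cal Y f (\<rho> Y) v = (if v \<in> Fun (f ` Y) then \<rho> Y (push_star (f ` Y) id v) else 0)"
      using True assms by (intro push_cal_inj) auto
    also have "\<dots> = \<rho> Y v"
      using True assms(1) image[OF True] by (auto simp: calibrations_def push_star_ident)
    finally show ?thesis
      unfolding cal_push_def fibre using True by simp
  qed (use assms(1) in \<open>simp add: cal_push_def fibre calibrations_def\<close>)
qed

lemma cal_push_comp:
  fixes \<rho> :: "nat set \<Rightarrow> (nat \<Rightarrow> 'a::{comm_monoid_add,finite}) \<Rightarrow> 'm::comm_monoid_add"
  assumes "finite H" and "\<And>X. X \<in> H \<Longrightarrow> finite X"
  shows "cal_push ((`) f ` H) g (cal_push H f \<rho>) = cal_push H (\<lambda>r. g (f r)) \<rho>"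
proof (intro ext)
  fix Y v
  let ?T = "{Z \<in> (`) f ` H. g ` Z = Y}"
  let ?S = "{X \<in> H. g ` f ` X = Y}"
  have "cal_push ((`) f ` H) g (cal_push H f \<rho>) Y v
      = (\<Sum>Z\<in>?T. \<Sum>X\<in>{X \<in> H. f ` X = Z}. push_cal Z g (push_cal X f (\<rho> X)) v)"
    unfolding cal_push_def by (simp add: push_cal_sum)
  also have "\<dots> = (\<Sum>Z\<in>?T. \<Sum>X\<in>{X \<in> ?S. f ` X = Z}. push_cal X (\<lambda>r. g (f r)) (\<rho> X) v)"
  proof (intro sum.cong refl)
    fix Z
    assume "Z \<in> ?T"
    then have "g ` Z = Y"
      by simp
    then show "{X \<in> H. f ` X = Z} = {X \<in> ?S. f ` X = Z}"
      by blast
  next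
    fix Z X
    assume "X \<in> {X \<in> ?S. f ` X = Z}"
    then show "push_cal Z g (push_cal X f (\<rho> X)) v = push_cal X (\<lambda>r. g (f r)) (\<rho> X) v"
      using push_cal_comp[OF assms(2), of X f g "\<rho> X"] by auto
  qed
  also have "\<dots> = (\<Sum>X\<in>?S. push_cal X (\<lambda>r. g (f r)) (\<rho> X) v)"
    by (rule sum.group) (use assms(1) in auto)
  also have "\<dots> = cal_push H (\<lambda>r. g (f r)) \<rho> Y v"
    unfolding cal_push_def by (simp add: image_image)
  finally show "cal_push ((`) f ` H) g (cal_push H f \<rho>) Y v = cal_push H (\<lambda>r. g (f r)) \<rho> Y v" .
qed

lemma cal_push_Un:
  assumes "\<rho> \<in> calibrations H" and "\<sigma> \<in> calibrations K" and "finite H" and "finite K"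
  shows "cal_push (H \<union> K) f (\<lambda>X w. \<rho> X w + \<sigma> X w)
    = (\<lambda>Y v. cal_push H f \<rho> Y v + cal_push K f \<sigma> Y v)"
proof (intro ext)
  fix Y v
  let ?S = "{X \<in> H \<union> K. f ` X = Y}"
  have "finite ?S"
    using assms(3,4) by auto
  have vanish: "push_cal X f (\<rho> X) v = 0" if "X \<notin> H" for X
    using calibrations_vanish[OF assms(1) that] by (simp add: push_cal_zero)
  have vanish': "push_cal X f (\<sigma> X) v = 0" if "X \<notin> K" for X
    using calibrations_vanish[OF assms(2) that] by (simp add: push_cal_zero)
  have "cal_push (H \<union> K) f (\<lambda>X w. \<rho> X w + \<sigma> X w) Y v
     = (\<Sum>X\<in>?S. push_cal X f (\<rho> X) v) + (\<Sum>X\<in>?S. push_cal X f (\<sigma> X) v)"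
    unfolding cal_push_def by (simp add: push_cal_add sum.distrib)
  also have "(\<Sum>X\<in>?S. push_cal X f (\<rho> X) v) = cal_push H f \<rho> Y v"
    unfolding cal_push_def using \<open>finite ?S\<close> vanish by (intro sum.mono_neutral_right) auto
  also have "(\<Sum>X\<in>?S. push_cal X f (\<sigma> X) v) = cal_push K f \<sigma> Y v"
    unfolding cal_push_def using \<open>finite ?S\<close> vanish' by (intro sum.mono_neutral_right) auto
  finally show "cal_push (H \<union> K) f (\<lambda>X w. \<rho> X w + \<sigma> X w) Y v
    = cal_push H f \<rho> Y v + cal_push K f \<sigma> Y v" .
qed

subsection \<open>Calibrated hypergraphs\<close>

lemma hypergraphs_finite: "H \<in> hypergraphs l \<Longrightarrow> finite H"
  by (rule finite_subset[of H "Pow {..<l}"]) (auto simp: hypergraphs_def)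

lemma hypergraphs_finite_edge: "H \<in> hypergraphs l \<Longrightarrow> X \<in> H \<Longrightarrow> finite X"
  by (rule finite_subset[of X "{..<l}"]) (auto simp: hypergraphs_def)

lemma GCE:
  assumes "x \<in> GC l"
  obtains H \<rho> where "x = (H, \<rho>)" "H \<in> hypergraphs l" "\<rho> \<in> calibrations H"
  using assms by (auto simp: GC_def)

lemma cal_cup_eq_cal_push:
  assumes H: "H \<in> hypergraphs l" and \<rho>: "\<rho> \<in> calibrations H" and K: "K \<in> hypergraphs m"
  shows "cal_cup l H K \<rho> \<sigma> = (\<lambda>X w. \<rho> X w + cal_push K (\<lambda>r. r + l) \<sigma> X w)"
proof (intro ext)
  fix X w
  consider (left) "X \<in> H" | (right) Z where "X \<notin> H" "Z \<in> K" "X = (\<lambda>r. r + l) ` Z"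
    | (none) "X \<notin> H" "X \<notin> (`) (\<lambda>r. r + l) ` K"
    by blast
  then show "cal_cup l H K \<rho> \<sigma> X w = \<rho> X w + cal_push K (\<lambda>r. r + l) \<sigma> X w"
  proof cases
    case left
    \<comment> \<open>shifted edges are non-empty and lie above \<open>l\<close>, so none of them is an edge of \<open>H\<close>\<close>
    have fibre: "{Z \<in> K. (\<lambda>r. r + l) ` Z = X} = {}"
      using left H K by (fastforce simp: hypergraphs_def)
    show ?thesis
      unfolding cal_cup_def cal_push_def fibre using left by simp
  next
    case right
    have fibre: "{Z' \<in> K. (\<lambda>r. r + l) ` Z' = X} = {Z}"
      using right by (auto simp: inj_image_eq_iff inj_on_def)
    have "push_cal Z (\<lambda>r. r + l) (\<sigma> Z) w
        = (if w \<in> Fun X then \<sigma> Z (push_star X (\<lambda>r. r - l) w) else 0)"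
      using push_cal_inj[of Z "\<lambda>r. r - l" "\<lambda>r. r + l" "\<sigma> Z" w]
        hypergraphs_finite_edge[OF K right(2)] right(3) by simp
    moreover have "(\<lambda>r. r - l) ` X = Z"
      using right(3) by (simp add: image_image)
    ultimately show ?thesis
      unfolding cal_cup_def cal_push_def fibre
      using right calibrations_vanish[OF \<rho> right(1)] by (auto simp: shift_set_def)
  next
    case none
    then have fibre: "{Z \<in> K. (\<lambda>r. r + l) ` Z = X} = {}"
      by auto
    show ?thesis
      unfolding cal_cup_def cal_push_def fibre
      using none calibrations_vanish[OF \<rho> none(1)] by (auto simp: shift_set_def)
  qed
qed

definition chg_add :: "('a, 'm::plus) chg \<Rightarrow> ('a, 'm) chg \<Rightarrow> ('a, 'm) chg" where
  "chg_add = (\<lambda>(H, \<rho>) (K, \<sigma>). (H \<union> K, \<lambda>X w. \<rho> X w + \<sigma> X w))"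

lemma chg_add_assoc: "chg_add (chg_add x y) z = chg_add x (chg_add y (z :: ('a, 'm::semigroup_add) chg))"
  by (auto simp: chg_add_def add.assoc Un_assoc split: prod.splits)

lemma chg_add_GC_unit_left: "chg_add GC_unit x = x"
  by (auto simp: chg_add_def GC_unit_def cal_unit_def split: prod.splits)

lemma chg_add_GC_unit_right: "chg_add x GC_unit = x"
  by (auto simp: chg_add_def GC_unit_def cal_unit_def split: prod.splits)

lemma GC_map_GC_unit: "GC_map f GC_unit = GC_unit"
  by (simp add: GC_map_def GC_unit_def cal_unit_def cal_push_def)

lemma GC_mono: "l \<le> k \<Longrightarrow> GC l \<subseteq> GC k"
  by (force simp: GC_def hypergraphs_def)

lemma chg_add_in_GC:
  assumes "x \<in> GC l" and "y \<in> GC l"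
  shows "chg_add x y \<in> GC l"
  using assms calibrations_add by (fastforce simp: GC_def chg_add_def hypergraphs_def)

lemma GC_map_in_GC:
  assumes "x \<in> GC l" and "\<And>r. r < l \<Longrightarrow> f r < p"
  shows "GC_map f x \<in> GC p"
proof -
  obtain H \<rho> where x: "x = (H, \<rho>)" "H \<in> hypergraphs l" "\<rho> \<in> calibrations H"
    using assms(1) by (rule GCE)
  have "(`) f ` H \<in> hypergraphs p"
    using x(2) assms(2) by (auto simp: hypergraphs_def)
  then show ?thesis
    using x cal_push_in_calibrations[of H f \<rho>] by (simp add: GC_def GC_map_def)
qed

lemma GC_cup_eq_chg_add:
  assumes "x \<in> GC l" and "y \<in> GC m"
  shows "GC_cup l x y = chg_add x (GC_map (\<lambda>r. r + l) y)"
proof -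
  obtain H \<rho> where x: "x = (H, \<rho>)" "H \<in> hypergraphs l" "\<rho> \<in> calibrations H"
    using assms(1) by (rule GCE)
  obtain K \<sigma> where y: "y = (K, \<sigma>)" "K \<in> hypergraphs m"
    using assms(2) by (rule GCE)
  show ?thesis
    using x y cal_cup_eq_cal_push[OF x(2,3) y(2)]
    by (simp add: GC_cup_def GC_map_def chg_add_def hg_cup_def shift_set_def[abs_def])
qed

lemma GC_cup_in_GC:
  assumes "x \<in> GC l" and "y \<in> GC m"
  shows "GC_cup l x y \<in> GC (l + m)"
  unfolding GC_cup_eq_chg_add[OF assms]
  using GC_mono[of l "l + m"] assms by (auto intro!: chg_add_in_GC GC_map_in_GC)

lemma GC_map_cong:
  assumes "x \<in> GC l" and "\<And>r. r < l \<Longrightarrow> f r = g r"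
  shows "GC_map f x = GC_map g x"
proof -
  obtain H \<rho> where x: "x = (H, \<rho>)" "H \<in> hypergraphs l"
    using assms(1) by (rule GCE)
  have "\<And>X r. X \<in> H \<Longrightarrow> r \<in> X \<Longrightarrow> f r = g r"
    using x(2) assms(2) by (auto simp: hypergraphs_def)
  then have "(`) f ` H = (`) g ` H" and "cal_push H f \<rho> = cal_push H g \<rho>"
    by (auto intro!: image_cong cal_push_cong)
  then show ?thesis
    using x by (simp add: GC_map_def)
qed

lemma GC_map_ident:
  assumes "x \<in> GC l" and "\<And>r. r < l \<Longrightarrow> f r = r"
  shows "GC_map f x = x"
proof -
  obtain H \<rho> where x: "x = (H, \<rho>)" "H \<in> hypergraphs l" "\<rho> \<in> calibrations H"
    using assms(1) by (rule GCE)
  have ident: "\<And>X r. X \<in> H \<Longrightarrow> r \<in> X \<Longrightarrow> f r = r"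
    using x(2) assms(2) by (auto simp: hypergraphs_def)
  then have "(`) f ` H = H"
    by (force intro: image_cong)
  moreover have "cal_push H f \<rho> = \<rho>"
    using x(3) hypergraphs_finite_edge[OF x(2)] ident by (rule cal_push_ident)
  ultimately show ?thesis
    using x by (simp add: GC_map_def)
qed

lemma GC_map_comp:
  fixes x :: "('a::{comm_monoid_add,finite}, 'm::comm_monoid_add) chg"
  assumes "x \<in> GC l"
  shows "GC_map g (GC_map f x) = GC_map (g \<circ> f) x"
proof -
  obtain H \<rho> where x: "x = (H, \<rho>)" "H \<in> hypergraphs l"
    using assms by (rule GCE)
  have "cal_push ((`) f ` H) g (cal_push H f \<rho>) = cal_push H (\<lambda>r. g (f r)) \<rho>"
    using hypergraphs_finite[OF x(2)] hypergraphs_finite_edge[OF x(2)] by (rule cal_push_comp)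
  then show ?thesis
    using x by (simp add: GC_map_def image_comp comp_def)
qed

lemma GC_map_chg_add:
  assumes "x \<in> GC l" and "y \<in> GC k"
  shows "GC_map f (chg_add x y) = chg_add (GC_map f x) (GC_map f y)"
proof -
  obtain H \<rho> where x: "x = (H, \<rho>)" "H \<in> hypergraphs l" "\<rho> \<in> calibrations H"
    using assms(1) by (rule GCE)
  obtain K \<sigma> where y: "y = (K, \<sigma>)" "K \<in> hypergraphs k" "\<sigma> \<in> calibrations K"
    using assms(2) by (rule GCE)
  show ?thesis
    using x y cal_push_Un[OF x(3) y(3) hypergraphs_finite[OF x(2)] hypergraphs_finite[OF y(2)]]
    by (simp add: GC_map_def chg_add_def image_Un)
qed

subsection \<open>The graded monad laws\<close>

lemma omega_hom_less: "f \<in> omega_hom l p \<Longrightarrow> r < l \<Longrightarrow> f r < p"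
  by (auto simp: omega_hom_def)

lemma GC_unit_in_GC: "GC_unit \<in> GC 0"
  by (simp add: GC_unit_def GC_def hypergraphs_def calibrations_def cal_unit_def)

lemma GC_map_omega_id: "x \<in> GC l \<Longrightarrow> GC_map (omega_id l) x = x"
  by (erule GC_map_ident) (simp add: omega_id_def)

lemma GC_map_omega_comp:
  fixes x :: "('a::{comm_monoid_add,finite}, 'm::comm_monoid_add) chg"
  assumes "x \<in> GC l"
  shows "GC_map (omega_comp l g f) x = GC_map g (GC_map f x)"
proof -
  have "GC_map (omega_comp l g f) x = GC_map (g \<circ> f) x"
    using assms by (rule GC_map_cong) (simp add: omega_comp_def compose_def)
  then show ?thesis
    using GC_map_comp[OF assms] by simp
qed

lemma GC_cup_assoc:
  fixes x :: "('a::{comm_monoid_add,finite}, 'm::comm_monoid_add) chg"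
  assumes x: "x \<in> GC l" and y: "y \<in> GC m" and z: "z \<in> GC n"
  shows "GC_cup (l + m) (GC_cup l x y) z = GC_cup l x (GC_cup m y z)"
proof -
  have shift_z: "GC_map (\<lambda>r. r + m) z \<in> GC (m + n)"
    using z by (rule GC_map_in_GC) simp
  have "GC_cup l x (GC_cup m y z)
      = chg_add x (GC_map (\<lambda>r. r + l) (chg_add y (GC_map (\<lambda>r. r + m) z)))"
    using GC_cup_eq_chg_add[OF x GC_cup_in_GC[OF y z]] GC_cup_eq_chg_add[OF y z] by simp
  also have "GC_map (\<lambda>r. r + l) (chg_add y (GC_map (\<lambda>r. r + m) z))
      = chg_add (GC_map (\<lambda>r. r + l) y) (GC_map (\<lambda>r. r + l) (GC_map (\<lambda>r. r + m) z))"
    using y shift_z by (simp add: GC_map_chg_add)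
  also have "GC_map (\<lambda>r. r + l) (GC_map (\<lambda>r. r + m) z) = GC_map (\<lambda>r. r + (l + m)) z"
    using z by (simp add: GC_map_comp comp_def ac_simps)
  also have "chg_add x (chg_add (GC_map (\<lambda>r. r + l) y) (GC_map (\<lambda>r. r + (l + m)) z))
      = chg_add (chg_add x (GC_map (\<lambda>r. r + l) y)) (GC_map (\<lambda>r. r + (l + m)) z)"
    by (rule chg_add_assoc[symmetric])
  also have "chg_add x (GC_map (\<lambda>r. r + l) y) = GC_cup l x y"
    using x y by (rule GC_cup_eq_chg_add[symmetric])
  also have "chg_add (GC_cup l x y) (GC_map (\<lambda>r. r + (l + m)) z) = GC_cup (l + m) (GC_cup l x y) z"
    using GC_cup_in_GC[OF x y] z by (rule GC_cup_eq_chg_add[symmetric])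
  finally show ?thesis
    by simp
qed

lemma GC_cup_GC_unit_right: "x \<in> GC l \<Longrightarrow> GC_cup l x GC_unit = x"
  by (simp add: GC_cup_eq_chg_add[OF _ GC_unit_in_GC] GC_map_GC_unit chg_add_GC_unit_right)

lemma GC_cup_GC_unit_left: "x \<in> GC l \<Longrightarrow> GC_cup 0 GC_unit x = x"
  by (simp add: GC_cup_eq_chg_add[OF GC_unit_in_GC] chg_add_GC_unit_left GC_map_ident)

lemma GC_map_omega_cup:
  fixes x :: "('a::{comm_monoid_add,finite}, 'm::comm_monoid_add) chg"
  assumes f: "f \<in> omega_hom l p" and g: "g \<in> omega_hom m q" and x: "x \<in> GC l" and y: "y \<in> GC m"
  shows "GC_map (omega_cup l m p f g) (GC_cup l x y) = GC_cup p (GC_map f x) (GC_map g y)"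
proof -
  let ?F = "omega_cup l m p f g"
  have shift_y: "GC_map (\<lambda>r. r + l) y \<in> GC (l + m)"
    using y by (rule GC_map_in_GC) simp
  have "GC_map ?F (GC_cup l x y) = chg_add (GC_map ?F x) (GC_map ?F (GC_map (\<lambda>r. r + l) y))"
    using x y shift_y by (simp add: GC_cup_eq_chg_add GC_map_chg_add)
  also have "GC_map ?F x = GC_map f x"
    using x by (rule GC_map_cong) (simp add: omega_cup_def)
  also have "GC_map ?F (GC_map (\<lambda>r. r + l) y) = GC_map ((\<lambda>r. r + p) \<circ> g) y"
    unfolding GC_map_comp[OF y] using y by (rule GC_map_cong) (simp add: omega_cup_def)
  also have "\<dots> = GC_map (\<lambda>r. r + p) (GC_map g y)"
    using GC_map_comp[OF y] by simp
  also have "chg_add (GC_map f x) \<dots> = GC_cup p (GC_map f x) (GC_map g y)"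
  proof (rule GC_cup_eq_chg_add[symmetric])
    show "GC_map f x \<in> GC p"
      using x by (rule GC_map_in_GC) (rule omega_hom_less[OF f])
    show "GC_map g y \<in> GC q"
      using y by (rule GC_map_in_GC) (rule omega_hom_less[OF g])
  qed
  finally show ?thesis .
qed

theorem proposition3p26:
  shows "graded_Omega_monad
           (GC :: nat \<Rightarrow> ('a::{comm_monoid_add,finite}, 'm::{comm_monoid_add,finite}) chg set)
           GC_map GC_cup GC_unit"
  unfolding graded_Omega_monad_def
  by (intro conjI allI impI)
    (auto intro: GC_map_in_GC omega_hom_less GC_map_omega_id GC_map_omega_comp GC_cup_in_GC
      GC_unit_in_GC GC_cup_assoc GC_cup_GC_unit_right GC_cup_GC_unit_left GC_map_omega_cup)

end
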